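(* There exists a Lindelöf basically disconnected Hausdorff topological group which is not a $P$-space if and only if there exists a nondiscrete Lindelöf Boolean basically disconnected Hausdorff topological group of countable pseudocharacter.
   Context: All spaces are Tychonoff. A space is basically disconnected if the closure of every cozero set in it is open. A space is a $P$-space if every $G_\delta$-subset is open. For a topological group, countable pseudocharacter means the identity element is a $G_\delta$-set. A group is Boolean if every element has order at most $2$. *)

theory Defs
  imports "HOL-Analysis.Analysis" "HOL-Algebra.Group"
begin

definition topological_group :: "('a, 'b) monoid_scheme \<Rightarrow> 'a topology \<Rightarrow> bool" where
  "topological_group G T \<longleftrightarrow>
     group G \<and> topspace T = carrier G \<and>
     continuous_map (prod_topology T T) T (\<lambda>p. fst p \<otimes>\<^bsub>G\<^esub> snd p) \<and>
     continuous_map T T (\<lambda>x. inv\<^bsub>G\<^esub> x)"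

definition cozero_set_in :: "'a topology \<Rightarrow> 'a set \<Rightarrow> bool" where
  "cozero_set_in T U \<longleftrightarrow>
     (\<exists>f. continuous_map T euclideanreal f \<and> U = {x \<in> topspace T. f x \<noteq> 0})"

definition basically_disconnected :: "'a topology \<Rightarrow> bool" where
  "basically_disconnected T \<longleftrightarrow> (\<forall>U. cozero_set_in T U \<longrightarrow> openin T (T closure_of U))"

definition P_space :: "'a topology \<Rightarrow> bool" where
  "P_space T \<longleftrightarrow> (\<forall>S. gdelta_in T S \<longrightarrow> openin T S)"

definition boolean_group :: "('a, 'b) monoid_scheme \<Rightarrow> bool" where
  "boolean_group G \<longleftrightarrow> (\<forall>x \<in> carrier G. x \<otimes>\<^bsub>G\<^esub> x = \<one>\<^bsub>G\<^esub>)"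

definition countable_pseudocharacter :: "('a, 'b) monoid_scheme \<Rightarrow> 'a topology \<Rightarrow> bool" where
  "countable_pseudocharacter G T \<longleftrightarrow> gdelta_in T {\<one>\<^bsub>G\<^esub>}"

end

theory Submission
  imports Defs "HOL-Algebra.Generated_Groups"
begin

lemma gdelta_in_continuous_map_preimage:
  assumes f: "continuous_map X Y f" and S: "gdelta_in Y S"
  shows "gdelta_in X {x \<in> topspace X. f x \<in> S}"
proof -
  obtain C where C: "\<And>n. openin Y (C n)" "\<And>n. C (Suc n) \<subseteq> C n" "\<Inter>(range C) = S"
    using S unfolding gdelta_in_descending by metis
  define D where "D n = {x \<in> topspace X. f x \<in> C n}" for n
  have "openin X (D n)" for n
    unfolding D_def using f C(1) by (rule openin_continuous_map_preimage)
  moreover have "D (Suc n) \<subseteq> D n" for n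
    unfolding D_def using C(2) by blast
  moreover have "\<Inter>(range D) = {x \<in> topspace X. f x \<in> S}"
    unfolding D_def C(3)[symmetric] by blast
  ultimately show ?thesis
    unfolding gdelta_in_descending by metis
qed

lemma Lindelof_space_fsigma_subtopology:
  assumes "Lindelof_space X" "fsigma_in X S"
  shows "Lindelof_space (subtopology X S)"
proof -
  obtain \<C> where "countable \<C>" "\<And>C. C \<in> \<C> \<Longrightarrow> closedin X C" "\<Union>\<C> = S"
    using assms(2) unfolding fsigma_in_def union_of_def by blast
  then show ?thesis
    using Lindelof_space_Union Lindelof_space_closedin_subtopology[OF assms(1)] by metis
qed

lemma basically_disconnected_clopen_nbhd:
  assumes bd: "basically_disconnected X" and cr: "completely_regular_space X"
    and U: "openin X U" "x \<in> U"
  obtains C where "openin X C" "closedin X C" "x \<in> C" "C \<subseteq> U"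
proof -
  obtain f where f: "continuous_map X (top_of_set {0..1::real}) f" "f x = 0"
    "f ` (topspace X - U) \<subseteq> {1}"
    using cr U openin_subset unfolding completely_regular_space_def
    by (metis Diff_Diff_Int inf.absorb_iff2 openin_closedin_eq)
  have fc: "continuous_map X euclideanreal f"
    using f(1) continuous_map_in_subtopology by blast
  define P where "P = {y \<in> topspace X. max 0 (1/2 - f y) \<noteq> 0}"
  have "continuous_map X euclideanreal (\<lambda>y. max 0 (1/2 - f y))"
    by (intro continuous_intros fc)
  then have "cozero_set_in X P"
    unfolding cozero_set_in_def P_def by blast
  then have "openin X (X closure_of P)"
    using bd unfolding basically_disconnected_def by blast
  moreover have "closedin X {y \<in> topspace X. f y \<in> {..1/2}}"
    using fc by (rule closedin_continuous_map_preimage) simp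
  then have "X closure_of P \<subseteq> {y \<in> topspace X. f y \<in> {..1/2}}"
    by (rule closure_of_minimal[rotated]) (auto simp: P_def)
  then have "X closure_of P \<subseteq> U"
    using f(3) by force
  moreover have "x \<in> X closure_of P"
    using f(2) U openin_subset closure_of_subset[of P X] unfolding P_def by fastforce
  ultimately show thesis
    using that closedin_closure_of by blast
qed

text \<open>The function \<open>(1/2)\<^sup>n\<close>, for the first \<open>n\<close> with \<open>x \<in> C n\<close>, witnesses that a union of a
  sequence of clopen sets is a cozero set.\<close>

lemma cozero_set_in_Union_clopen:
  fixes C :: "nat \<Rightarrow> 'a set"
  assumes op: "\<And>n. openin X (C n)" and cl: "\<And>n. closedin X (C n)"
  shows "cozero_set_in X (\<Union>n. C n)"
proof -
  define g where "g x = (if x \<in> (\<Union>n. C n) then (1/2::real) ^ (LEAST n. x \<in> C n) else 0)" for x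
  have C_sub: "C n \<subseteq> topspace X" for n
    using op openin_subset by blast
  have g_lower: "(1/2) ^ n \<le> g x" if "x \<in> C n" for x n
    using that unfolding g_def by (auto intro: power_decreasing Least_le)
  have g_nonneg: "g x \<ge> 0" for x
    unfolding g_def by simp
  have g_value: "\<exists>m. x \<in> C m \<and> g x = (1/2) ^ m" if "g x \<noteq> 0" for x
    using that unfolding g_def by (metis (mono_tags) LeastI UN_E)
  have ge_iff: "g x \<ge> a \<longleftrightarrow> (\<exists>n. x \<in> C n \<and> (1/2) ^ n \<ge> a)" if "a > 0" for x a
    using that g_lower g_value order_trans by (metis less_le_not_le)
  have gt_iff: "g x > a \<longleftrightarrow> (\<exists>n. x \<in> C n \<and> (1/2) ^ n > a)" if "a \<ge> 0" for x a
    using that g_lower g_value less_le_trans by (metis less_le_not_le)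
  have "closedin X {x \<in> topspace X. g x \<ge> a}" for a
  proof (cases "a > 0")
    case True
    obtain N where N: "(1/2::real) ^ N < a"
      using real_arch_pow_inv[OF True, of "1/2"] by auto
    have "{n. (1/2::real) ^ n \<ge> a} \<subseteq> {..<N}"
    proof
      fix n assume "n \<in> {n. (1/2::real) ^ n \<ge> a}"
      then have "(1/2::real) ^ N < (1/2) ^ n" using N less_le_trans by (metis mem_Collect_eq)
      then show "n \<in> {..<N}" by (simp add: power_strict_decreasing_iff)
    qed
    then have "closedin X (\<Union>n\<in>{n. (1/2::real) ^ n \<ge> a}. C n)"
      by (intro closedin_Union finite_imageI) (auto intro: finite_subset cl)
    moreover have "{x \<in> topspace X. g x \<ge> a} = (\<Union>n\<in>{n. (1/2::real) ^ n \<ge> a}. C n)"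
      using ge_iff[OF True] C_sub by auto
    ultimately show ?thesis by simp
  next
    case False
    then have "{x \<in> topspace X. g x \<ge> a} = topspace X"
      using g_nonneg by (auto intro: order_trans[of a 0] simp: not_less)
    then show ?thesis by simp
  qed
  moreover have "closedin X {x \<in> topspace X. g x \<le> a}" for a
  proof (cases "a \<ge> 0")
    case True
    have "openin X (\<Union>n\<in>{n. (1/2::real) ^ n > a}. C n)"
      using op by (intro openin_Union) auto
    moreover have "{x \<in> topspace X. g x \<le> a} = topspace X - (\<Union>n\<in>{n. (1/2::real) ^ n > a}. C n)"
      using gt_iff[OF True] by (auto simp: not_le[symmetric])
    ultimately show ?thesis by (simp add: closedin_diff)
  next
    case False
    then have "{x \<in> topspace X. g x \<le> a} = {}"
      using g_nonneg by (auto simp: not_le intro: less_le_trans)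
    then show ?thesis by (metis closedin_empty)
  qed
  ultimately have "continuous_map X euclideanreal g"
    unfolding continuous_map_upper_lower_semicontinuous_le by blast
  moreover have "(\<Union>n. C n) = {x \<in> topspace X. g x \<noteq> 0}"
    using C_sub unfolding g_def by auto
  ultimately show ?thesis
    unfolding cozero_set_in_def by blast
qed

lemma basically_disconnected_disjoint_closures:
  assumes "basically_disconnected X" "cozero_set_in X U" "openin X V" "U \<inter> V = {}"
  shows "X closure_of U \<inter> X closure_of V = {}"
proof -
  have "openin X (X closure_of U)"
    using assms(1,2) unfolding basically_disconnected_def by blast
  moreover have "V \<inter> X closure_of U = {}"
    using openin_Int_closure_of_eq_empty[OF assms(3)] assms(4) by blast
  ultimately show ?thesis
    using openin_Int_closure_of_eq_empty by blast
qed

lemma basically_disconnected_clopen_subtopology: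
  assumes bd: "basically_disconnected X" and K: "openin X K" "closedin X K"
  shows "basically_disconnected (subtopology X K)"
  unfolding basically_disconnected_def
proof (intro allI impI)
  fix U assume "cozero_set_in (subtopology X K) U"
  then obtain f where f: "continuous_map (subtopology X K) euclideanreal f"
    "U = {x \<in> topspace (subtopology X K). f x \<noteq> 0}"
    unfolding cozero_set_in_def by blast
  have K_sub: "K \<subseteq> topspace X"
    using K(1) openin_subset by blast
  have "continuous_map X euclideanreal (\<lambda>x. if x \<in> K then f x else 0)"
  proof (rule continuous_map_cases)
    show "continuous_map (subtopology X (X closure_of {x. x \<in> K})) euclideanreal f"
      using f(1) K(2) by (simp add: closure_of_closedin)
    show "continuous_map (subtopology X (X closure_of {x. x \<notin> K})) euclideanreal (\<lambda>x. 0)"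
      by (intro continuous_map_const[THEN iffD2] disjI2) simp
    have "X frontier_of {x. x \<in> K} = {}"
      using K K_sub by (simp add: frontier_of_eq_empty)
    then show "f x = 0" if "x \<in> X frontier_of {x. x \<in> K}" for x
      using that by blast
  qed
  moreover have "U = {x \<in> topspace X. (if x \<in> K then f x else 0) \<noteq> 0}"
    using f(2) K_sub by auto
  ultimately have "cozero_set_in X U"
    unfolding cozero_set_in_def by blast
  then have "openin X (X closure_of U)"
    using bd unfolding basically_disconnected_def by blast
  moreover have "U \<subseteq> K"
    using f(2) by auto
  then have "X closure_of U \<subseteq> K"
    using K(2) by (rule closure_of_minimal)
  ultimately show "openin (subtopology X K) (subtopology X K closure_of U)"
    using K(1) by (simp add: closure_of_subtopology_open openin_open_subtopology inf.absorb2)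
qed

lemma basically_disconnected_open_map_image:
  assumes bd: "basically_disconnected X" and f: "continuous_map X Y f" "open_map X Y f"
    and surj: "f ` topspace X = topspace Y"
  shows "basically_disconnected Y"
  unfolding basically_disconnected_def
proof (intro allI impI)
  fix U assume "cozero_set_in Y U"
  then obtain h where h: "continuous_map Y euclideanreal h" "U = {y \<in> topspace Y. h y \<noteq> 0}"
    unfolding cozero_set_in_def by blast
  define P where "P = {x \<in> topspace X. f x \<in> U}"
  have "P = {x \<in> topspace X. (h \<circ> f) x \<noteq> 0}"
    using f(1) h(2) unfolding P_def continuous_map_def by auto
  then have "cozero_set_in X P"
    unfolding cozero_set_in_def using continuous_map_compose[OF f(1) h(1)] by blast
  then have "openin X (X closure_of P)"
    using bd unfolding basically_disconnected_def by blast
  moreover have "Y closure_of U = f ` (X closure_of P)"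
  proof (rule equalityI)
    have "f ` (X closure_of P) \<subseteq> Y closure_of (f ` P)"
      using f(1) by (rule continuous_map_image_closure_subset)
    also have "\<dots> \<subseteq> Y closure_of U"
      by (rule closure_of_mono) (auto simp: P_def)
    finally show "f ` (X closure_of P) \<subseteq> Y closure_of U" .
  next
    show "Y closure_of U \<subseteq> f ` (X closure_of P)"
    proof
      fix y assume y: "y \<in> Y closure_of U"
      then have "y \<in> f ` topspace X"
        using surj closure_of_subset_topspace by fastforce
      then obtain x where x: "x \<in> topspace X" "y = f x"
        by blast
      have "x \<in> X closure_of P"
        unfolding in_closure_of
      proof (intro conjI allI impI)
        fix W assume W: "x \<in> W \<and> openin X W"
        then have "openin Y (f ` W)" "y \<in> f ` W"
          using f(2) x unfolding open_map_def by auto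
        then obtain w where "w \<in> W" "f w \<in> U"
          using y unfolding in_closure_of by blast
        then show "\<exists>p. p \<in> P \<and> p \<in> W"
          using W openin_subset unfolding P_def by blast
      qed (rule x(1))
      then show "y \<in> f ` (X closure_of P)"
        using x(2) by blast
    qed
  qed
  ultimately show "openin Y (Y closure_of U)"
    using f(2) unfolding open_map_def by simp
qed

lemma (in group) mult_inv_cancel_left [simp]:
  "x \<in> carrier G \<Longrightarrow> y \<in> carrier G \<Longrightarrow> x \<otimes> (inv x \<otimes> y) = y"
  by (simp add: m_assoc[symmetric])

lemma (in group) inv_mult_cancel_left [simp]:
  "x \<in> carrier G \<Longrightarrow> y \<in> carrier G \<Longrightarrow> inv x \<otimes> (x \<otimes> y) = y"
  by (simp add: m_assoc[symmetric])

locale topgroup = group G for G (structure) +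
  fixes T :: "'a topology"
  assumes topological_group: "topological_group G T"
begin

lemma topspace_eq [simp]: "topspace T = carrier G"
  using topological_group by (simp add: topological_group_def)

lemma continuous_map_mult: "continuous_map (prod_topology T T) T (\<lambda>p. fst p \<otimes> snd p)"
  using topological_group by (simp add: topological_group_def)

lemma continuous_map_inv: "continuous_map T T (\<lambda>x. inv x)"
  using topological_group by (simp add: topological_group_def)

lemma openin_subset_carrier: "openin T U \<Longrightarrow> U \<subseteq> carrier G"
  using openin_subset by fastforce

lemma continuous_map_mult_fun:
  assumes "continuous_map T T f" "continuous_map T T g"
  shows "continuous_map T T (\<lambda>x. f x \<otimes> g x)"
  using continuous_map_compose[OF continuous_map_pairedI[OF assms] continuous_map_mult]
  by (simp add: o_def)

lemma continuous_map_lmult: "a \<in> carrier G \<Longrightarrow> continuous_map T T (\<lambda>x. a \<otimes> x)"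
  by (intro continuous_map_mult_fun) auto

lemma continuous_map_rmult: "a \<in> carrier G \<Longrightarrow> continuous_map T T (\<lambda>x. x \<otimes> a)"
  by (intro continuous_map_mult_fun) auto

lemma homeomorphic_map_lmult: "a \<in> carrier G \<Longrightarrow> homeomorphic_map T T (\<lambda>x. a \<otimes> x)"
  unfolding homeomorphic_map_maps homeomorphic_maps_def
  by (intro exI[of _ "\<lambda>x. inv a \<otimes> x"]) (simp add: continuous_map_lmult m_assoc[symmetric])

lemma homeomorphic_map_inv: "homeomorphic_map T T (\<lambda>x. inv x)"
  by (rule homeomorphic_map_involution) (simp_all add: continuous_map_inv)

lemma openin_lmult_image:
  assumes "openin T U" "a \<in> carrier G"
  shows "openin T ((\<lambda>x. a \<otimes> x) ` U)"
  using homeomorphic_map_openness[OF homeomorphic_map_lmult[OF assms(2)] openin_subset[OF assms(1)]]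
    assms(1) by blast

lemma openin_inv_image: "openin T U \<Longrightarrow> openin T ((\<lambda>x. inv x) ` U)"
  using homeomorphic_map_openness[OF homeomorphic_map_inv openin_subset] by blast

lemma closedin_inv_image: "closedin T C \<Longrightarrow> closedin T ((\<lambda>x. inv x) ` C)"
  using homeomorphic_map_closedness[OF homeomorphic_map_inv closedin_subset] by blast

lemma closure_of_inv_image:
  "S \<subseteq> carrier G \<Longrightarrow> T closure_of ((\<lambda>x. inv x) ` S) = (\<lambda>x. inv x) ` (T closure_of S)"
  using homeomorphic_map_closure_of[OF homeomorphic_map_inv] by simp

lemma lmult_image_one: "a \<in> carrier G \<Longrightarrow> \<one> \<in> U \<Longrightarrow> a \<in> (\<lambda>x. a \<otimes> x) ` U"
  by (rule image_eqI[of _ _ \<one>]) simp_all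

lemma mult_openin_nbhds:
  assumes "openin T U" "x \<in> carrier G" "y \<in> carrier G" "x \<otimes> y \<in> U"
  obtains A B where "openin T A" "openin T B" "x \<in> A" "y \<in> B" "\<And>a b. a \<in> A \<Longrightarrow> b \<in> B \<Longrightarrow> a \<otimes> b \<in> U"
proof -
  let ?S = "{p \<in> topspace (prod_topology T T). fst p \<otimes> snd p \<in> U}"
  have "openin (prod_topology T T) ?S"
    using continuous_map_mult assms(1) by (rule openin_continuous_map_preimage)
  moreover have "(x, y) \<in> ?S"
    using assms by simp
  ultimately obtain A B where AB: "openin T A" "openin T B" "x \<in> A" "y \<in> B" "A \<times> B \<subseteq> ?S"
    unfolding openin_prod_topology_alt by meson
  have "a \<otimes> b \<in> U" if "a \<in> A" "b \<in> B" for a b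
    using AB(5) that by auto
  then show thesis
    by (rule that[OF AB(1-4)])
qed

lemma symmetric_square_nbhd:
  assumes "openin T U" "\<one> \<in> U"
  obtains V where "openin T V" "\<one> \<in> V" "\<And>a. a \<in> V \<Longrightarrow> inv a \<in> V"
    "\<And>a b. a \<in> V \<Longrightarrow> b \<in> V \<Longrightarrow> a \<otimes> b \<in> U"
proof -
  obtain A B where AB: "openin T A" "openin T B" "\<one> \<in> A" "\<one> \<in> B"
    "\<And>a b. a \<in> A \<Longrightarrow> b \<in> B \<Longrightarrow> a \<otimes> b \<in> U"
    using mult_openin_nbhds[OF assms(1) one_closed one_closed] assms(2) by auto
  define V where "V = (A \<inter> B) \<inter> (\<lambda>x. inv x) ` (A \<inter> B)"
  have AB_sub: "A \<inter> B \<subseteq> carrier G"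
    using AB(1) openin_subset_carrier by blast
  show thesis
  proof (rule that)
    show "openin T V"
      unfolding V_def using AB(1,2) by (intro openin_Int openin_inv_image) auto
    show "\<one> \<in> V"
      unfolding V_def using AB(3,4) by (auto intro: image_eqI[of _ _ \<one>])
    show "inv a \<in> V" if a: "a \<in> V" for a
    proof -
      obtain b where b: "b \<in> A \<inter> B" "a = inv b"
        using a unfolding V_def by blast
      then have "inv a = b"
        using AB_sub by auto
      then show ?thesis
        using a b(1) unfolding V_def by blast
    qed
    show "a \<otimes> b \<in> U" if "a \<in> V" "b \<in> V" for a b
      using that AB(5) unfolding V_def by blast
  qed
qed

lemma regular_space: "regular_space T"
  unfolding regular_space
proof (intro allI impI)
  fix C a assume Ca: "closedin T C \<and> a \<in> topspace T - C"
  then have a: "a \<in> carrier G" by simp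
  have "openin T (topspace T - C)"
    using Ca by (simp add: closedin_def)
  then have "openin T {x \<in> topspace T. a \<otimes> x \<in> topspace T - C}"
    by (rule openin_continuous_map_preimage[OF continuous_map_lmult[OF a]])
  moreover have "\<one> \<in> {x \<in> topspace T. a \<otimes> x \<in> topspace T - C}"
    using Ca a by simp
  ultimately obtain V where V: "openin T V" "\<one> \<in> V" "\<And>v. v \<in> V \<Longrightarrow> inv v \<in> V"
    "\<And>v w. v \<in> V \<Longrightarrow> w \<in> V \<Longrightarrow> v \<otimes> w \<in> {x \<in> topspace T. a \<otimes> x \<in> topspace T - C}"
    using symmetric_square_nbhd by blast
  have V_sub: "V \<subseteq> carrier G"
    using V(1) openin_subset_carrier by blast
  have "z \<notin> C" if z: "z \<in> T closure_of ((\<lambda>x. a \<otimes> x) ` V)" for z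
  proof -
    have zG: "z \<in> carrier G"
      using z closure_of_subset_topspace by fastforce
    have "z \<in> (\<lambda>x. z \<otimes> x) ` V \<and> openin T ((\<lambda>x. z \<otimes> x) ` V)"
      using V zG by (simp add: openin_lmult_image lmult_image_one)
    then obtain y where "y \<in> (\<lambda>x. a \<otimes> x) ` V" "y \<in> (\<lambda>x. z \<otimes> x) ` V"
      using z unfolding in_closure_of by (elim conjE allE impE exE) auto
    then obtain v w where vw: "v \<in> V" "w \<in> V" "z \<otimes> v = a \<otimes> w"
      by (elim imageE) simp
    have vG: "v \<in> carrier G" and wG: "w \<in> carrier G"
      using vw V_sub by auto
    have "z = (a \<otimes> w) \<otimes> inv v"
      using inv_solve_right[OF zG _ vG] vw(3) a wG by simp
    then have "z = a \<otimes> (w \<otimes> inv v)"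
      using a vG wG by (simp add: m_assoc)
    then show "z \<notin> C"
      using V(4)[of w "inv v"] V(3)[of v] vw by auto
  qed
  then have "disjnt C (T closure_of ((\<lambda>x. a \<otimes> x) ` V))"
    unfolding disjnt_iff by blast
  then show "\<exists>U. openin T U \<and> a \<in> U \<and> disjnt C (T closure_of U)"
    using V(1,2) a by (blast intro: openin_lmult_image lmult_image_one)
qed

lemma Hausdorff_space_if_closedin_one:
  assumes "closedin T {\<one>}"
  shows "Hausdorff_space T"
proof (rule regular_t1_imp_Hausdorff_space[OF regular_space])
  have "closedin T {a}" if "a \<in> carrier G" for a
    using homeomorphic_map_closedness[OF homeomorphic_map_lmult[OF that], of "{\<one>}"] assms that
    by simp
  then show "t1_space T"
    unfolding t1_space_closedin_singleton by simp
qed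

lemma discrete_topology_if_openin_one:
  assumes "openin T {\<one>}"
  shows "T = discrete_topology (topspace T)"
proof -
  have "openin T {x}" if "x \<in> carrier G" for x
    using openin_lmult_image[OF assms that] that by simp
  then have "discrete_topology (topspace T) = T"
    by (simp add: discrete_topology_unique)
  then show ?thesis
    by simp
qed

lemma openin_subgroup:
  assumes K: "subgroup K G" and V: "openin T V" "\<one> \<in> V" "V \<subseteq> K"
  shows "openin T K"
proof (subst openin_subopen, intro ballI)
  fix x assume x: "x \<in> K"
  have xG: "x \<in> carrier G"
    using K x by (rule subgroup.mem_carrier)
  have "(\<lambda>v. x \<otimes> v) ` V \<subseteq> K"
    using subgroup.m_closed[OF K x] V(3) by auto
  moreover have "openin T ((\<lambda>v. x \<otimes> v) ` V)" "x \<in> (\<lambda>v. x \<otimes> v) ` V"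
    using V(1,2) xG by (simp_all add: openin_lmult_image lmult_image_one)
  ultimately show "\<exists>W. openin T W \<and> x \<in> W \<and> W \<subseteq> K"
    by blast
qed

lemma closedin_open_subgroup:
  assumes K: "subgroup K G" "openin T K"
  shows "closedin T K"
proof -
  have "topspace T - K = (\<Union>x\<in>carrier G - K. (\<lambda>k. x \<otimes> k) ` K)"
  proof (intro equalityI subsetI)
    fix x assume x: "x \<in> topspace T - K"
    then have "x \<in> (\<lambda>k. x \<otimes> k) ` K"
      using lmult_image_one subgroup.one_closed[OF K(1)] by simp
    then show "x \<in> (\<Union>x\<in>carrier G - K. (\<lambda>k. x \<otimes> k) ` K)"
      using x by auto
  next
    fix y assume "y \<in> (\<Union>x\<in>carrier G - K. (\<lambda>k. x \<otimes> k) ` K)"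
    then obtain x k where xk: "x \<in> carrier G" "x \<notin> K" "k \<in> K" "y = x \<otimes> k"
      by (elim UN_E imageE DiffE)
    have kG: "k \<in> carrier G"
      using K(1) xk(3) by (rule subgroup.mem_carrier)
    have "y \<notin> K"
    proof
      assume "y \<in> K"
      then have "y \<otimes> inv k \<in> K"
        using xk(3) K(1) by (simp add: subgroup.m_closed subgroup.m_inv_closed)
      moreover have "y \<otimes> inv k = x"
        using xk(1,4) kG by (simp add: m_assoc)
      ultimately show False
        using xk(2) by simp
    qed
    then show "y \<in> topspace T - K"
      using xk(1,4) kG by simp
  qed
  moreover have "openin T ((\<lambda>k. x \<otimes> k) ` K)" if "x \<in> carrier G - K" for x
    using openin_lmult_image K(2) that by blast
  then have "openin T (\<Union>x\<in>carrier G - K. (\<lambda>k. x \<otimes> k) ` K)"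
    by (intro openin_Union) blast
  ultimately have "openin T (topspace T - K)"
    by simp
  then show ?thesis
    using subgroup.subset[OF K(1)] by (simp add: closedin_def)
qed

lemma topological_group_subgroup:
  assumes K: "subgroup K G"
  shows "topological_group (G\<lparr>carrier := K\<rparr>) (subtopology T K)"
proof -
  have K_sub: "K \<subseteq> carrier G"
    using K subgroup.subset by blast
  have "continuous_map (prod_topology (subtopology T K) (subtopology T K)) (subtopology T K)
      (\<lambda>p. fst p \<otimes> snd p)"
    unfolding subtopology_Times[symmetric] continuous_map_in_subtopology
    using continuous_map_from_subtopology[OF continuous_map_mult] K
    by (auto simp: subgroup.m_closed)
  moreover have "continuous_map (subtopology T K) (subtopology T K) (\<lambda>x. inv x)"
    unfolding continuous_map_in_subtopology
    using continuous_map_from_subtopology[OF continuous_map_inv] K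
    by (auto simp: subgroup.m_inv_closed)
  then have "continuous_map (subtopology T K) (subtopology T K) (\<lambda>x. inv\<^bsub>G\<lparr>carrier := K\<rparr>\<^esub> x)"
    by (rule continuous_map_eq) (use K_sub K in \<open>auto simp: m_inv_consistent\<close>)
  ultimately show ?thesis
    unfolding topological_group_def using subgroup_imp_group[OF K] K_sub by auto
qed

end

lemma (in group) generate_commute:
  assumes S: "S \<subseteq> carrier G" and y: "y \<in> carrier G" "\<And>s. s \<in> S \<Longrightarrow> y \<otimes> s = s \<otimes> y"
    and x: "x \<in> generate G S"
  shows "y \<otimes> x = x \<otimes> y"
  using x
proof (induction x rule: generate.induct)
  case one
  then show ?case using y(1) by simp
next
  case (incl h)
  then show ?case by (rule y(2))
next
  case (inv h)
  have h: "h \<in> carrier G"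
    using inv S by blast
  have "y \<otimes> inv h = inv h \<otimes> (h \<otimes> y) \<otimes> inv h"
    using h y(1) by (simp add: m_assoc[symmetric])
  also have "\<dots> = inv h \<otimes> (y \<otimes> h) \<otimes> inv h"
    using y(2)[OF inv] by simp
  also have "\<dots> = inv h \<otimes> y"
    using h y(1) by (simp add: m_assoc)
  finally show ?case .
next
  case (eng h1 h2)
  have h: "h1 \<in> carrier G" "h2 \<in> carrier G"
    using eng.hyps generate_in_carrier[OF S] by auto
  have "y \<otimes> (h1 \<otimes> h2) = h1 \<otimes> (y \<otimes> h2)"
    using eng.IH(1) h y(1) by (simp add: m_assoc[symmetric])
  also have "\<dots> = h1 \<otimes> h2 \<otimes> y"
    using eng.IH(2) h y(1) by (simp add: m_assoc)
  finally show ?case .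
qed

lemma (in group) generate_boolean:
  assumes S: "S \<subseteq> carrier G" "\<And>s. s \<in> S \<Longrightarrow> s \<otimes> s = \<one>"
    "\<And>s t. s \<in> S \<Longrightarrow> t \<in> S \<Longrightarrow> s \<otimes> t = t \<otimes> s"
    and x: "x \<in> generate G S"
  shows "x \<otimes> x = \<one>"
proof -
  have gen_carrier: "y \<in> carrier G" if "y \<in> generate G S" for y
    using generate_in_carrier[OF S(1) that] .
  have S_comm: "s \<otimes> y = y \<otimes> s" if "s \<in> S" "y \<in> generate G S" for s y
    using generate_commute[OF S(1) _ _ that(2)] S(1,3) that(1) by blast
  have comm: "y \<otimes> z = z \<otimes> y" if "y \<in> generate G S" "z \<in> generate G S" for y z
    using generate_commute[OF S(1) gen_carrier[OF that(1)] _ that(2)] S_comm[OF _ that(1)] by simp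
  show ?thesis
    using x
  proof (induction x rule: generate.induct)
    case one
    then show ?case by simp
  next
    case (incl h)
    then show ?case by (rule S(2))
  next
    case (inv h)
    then have "h \<in> carrier G"
      using S(1) by blast
    then have "inv h \<otimes> inv h = inv (h \<otimes> h)"
      by (simp add: inv_mult_group)
    then show ?case
      using S(2)[OF inv] by simp
  next
    case (eng h1 h2)
    have h: "h1 \<in> carrier G" "h2 \<in> carrier G"
      using eng.hyps gen_carrier by auto
    have "h1 \<otimes> h2 \<otimes> (h1 \<otimes> h2) = h1 \<otimes> (h2 \<otimes> h1) \<otimes> h2"
      using h by (simp add: m_assoc)
    also have "\<dots> = h1 \<otimes> (h1 \<otimes> h2) \<otimes> h2"
      using comm[OF eng.hyps] by simp
    also have "\<dots> = (h1 \<otimes> h1) \<otimes> (h2 \<otimes> h2)"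
      using h by (simp add: m_assoc)
    also have "\<dots> = \<one>"
      using eng.IH by simp
    finally show ?case .
  qed
qed

context topgroup
begin

lemma open_boolean_subgroup:
  assumes U: "openin T U" "\<one> \<in> U" "\<And>x. x \<in> U \<Longrightarrow> x \<otimes> x = \<one>"
  obtains K where "subgroup K G" "openin T K" "\<And>x. x \<in> K \<Longrightarrow> x \<otimes> x = \<one>"
proof -
  obtain V where V: "openin T V" "\<one> \<in> V" "\<And>a. a \<in> V \<Longrightarrow> inv a \<in> V"
    "\<And>a b. a \<in> V \<Longrightarrow> b \<in> V \<Longrightarrow> a \<otimes> b \<in> U"
    using symmetric_square_nbhd[OF U(1,2)] by blast
  have V_sub: "V \<subseteq> carrier G"
    using V(1) by (rule openin_subset_carrier)
  have V_inv: "inv a = a" and V_sq: "a \<otimes> a = \<one>" if "a \<in> V" for a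
  proof -
    have "a \<otimes> \<one> \<in> U"
      using V(4)[OF that V(2)] .
    then show sq: "a \<otimes> a = \<one>"
      using U(3) V_sub that by (simp add: subset_iff)
    show "inv a = a"
      using inv_equality[OF sq] V_sub that by auto
  qed
  have V_comm: "a \<otimes> b = b \<otimes> a" if "a \<in> V" "b \<in> V" for a b
  proof -
    have a: "a \<in> carrier G" and b: "b \<in> carrier G"
      using V_sub that by auto
    have "inv (a \<otimes> b) = a \<otimes> b"
      using inv_equality[OF U(3)[OF V(4)[OF that]]] a b by simp
    moreover have "inv (a \<otimes> b) = inv b \<otimes> inv a"
      using a b by (rule inv_mult_group)
    ultimately show ?thesis
      using V_inv that by simp
  qed
  have K: "subgroup (generate G V) G"
    using V_sub by (rule generate_is_subgroup)
  have "V \<subseteq> generate G V"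
    by (rule subsetI) (rule generate.incl)
  show thesis
  proof (rule that)
    show "subgroup (generate G V) G"
      by (rule K)
    show "openin T (generate G V)"
      using K V(1,2) \<open>V \<subseteq> generate G V\<close> by (rule openin_subgroup)
    show "x \<otimes> x = \<one>" if "x \<in> generate G V" for x
      using generate_boolean[OF V_sub V_sq V_comm that] .
  qed
qed

end

lemma (in group) inv_image_iff:
  assumes "S \<subseteq> carrier G" "y \<in> carrier G"
  shows "y \<in> (\<lambda>x. inv x) ` S \<longleftrightarrow> inv y \<in> S"
proof
  assume "y \<in> (\<lambda>x. inv x) ` S"
  then obtain x where "x \<in> S" "y = inv x"
    by (elim imageE)
  then show "inv y \<in> S"
    using assms(1) by (simp add: subset_iff)
next
  assume "inv y \<in> S"
  then show "y \<in> (\<lambda>x. inv x) ` S"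
    using assms(2) by (intro image_eqI[of _ _ "inv y"]) simp_all
qed

context topgroup
begin

lemma Lindelof_space_non_involutions:
  assumes Lin: "Lindelof_space T" and one: "gdelta_in T {\<one>}"
  shows "Lindelof_space (subtopology T {x \<in> carrier G. x \<otimes> x \<noteq> \<one>})"
proof -
  have "continuous_map T T (\<lambda>x. x \<otimes> x)"
    by (intro continuous_map_mult_fun continuous_map_id[unfolded id_def])
  then have "gdelta_in T {x \<in> topspace T. x \<otimes> x \<in> {\<one>}}"
    using one by (rule gdelta_in_continuous_map_preimage)
  moreover have "topspace T - {x \<in> carrier G. x \<otimes> x \<noteq> \<one>} = {x \<in> topspace T. x \<otimes> x \<in> {\<one>}}"
    by auto
  ultimately have "fsigma_in T {x \<in> carrier G. x \<otimes> x \<noteq> \<one>}"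
    unfolding fsigma_in_gdelta_in by auto
  then show ?thesis
    using Lin by (intro Lindelof_space_fsigma_subtopology)
qed

lemma antisymmetric_clopen_nbhd:
  assumes bd: "basically_disconnected T" and cr: "completely_regular_space T"
    and Hd: "Hausdorff_space T" and x: "x \<in> carrier G" "x \<otimes> x \<noteq> \<one>"
  obtains C where "openin T C" "closedin T C" "x \<in> C" "\<And>y. y \<in> C \<Longrightarrow> inv y \<notin> C"
proof -
  have "x \<noteq> inv x"
    using x r_inv by metis
  then obtain P Q where PQ: "openin T P" "openin T Q" "x \<in> P" "inv x \<in> Q" "disjnt P Q"
    using Hd x unfolding Hausdorff_space_def by (metis inv_closed topspace_eq)
  have Q_sub: "Q \<subseteq> carrier G"
    using PQ(2) by (rule openin_subset_carrier)
  have "openin T (P \<inter> (\<lambda>y. inv y) ` Q)"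
    using PQ(1,2) by (intro openin_Int openin_inv_image)
  moreover have "x \<in> P \<inter> (\<lambda>y. inv y) ` Q"
    using PQ(3,4) x by (auto intro: image_eqI[of _ _ "inv x"])
  ultimately obtain C where C: "openin T C" "closedin T C" "x \<in> C" "C \<subseteq> P \<inter> (\<lambda>y. inv y) ` Q"
    using basically_disconnected_clopen_nbhd[OF bd cr] by metis
  have "inv y \<notin> C" if y: "y \<in> C" for y
  proof
    assume "inv y \<in> C"
    then obtain q where "q \<in> Q" "inv y = inv q"
      using C(4) by blast
    then have "y \<in> Q"
      using y C(1) Q_sub openin_subset_carrier by (metis inv_inv subsetD)
    moreover have "y \<in> P"
      using y C(4) by blast
    ultimately show False
      using PQ(5) by (simp add: disjnt_iff)
  qed
  then show thesis
    using that C(1-3) by blast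
qed

text \<open>Each \<open>U n\<close> is \<open>c n\<close> minus everything met before by a \<open>c k\<close> or its inverse, so \<open>\<Union>U\<close> meets
  each pair \<open>{x, inv x}\<close> in at most one point.\<close>

lemma clopen_cover_split_by_inversion:
  fixes c :: "nat \<Rightarrow> 'a set"
  assumes c: "\<And>n. openin T (c n)" "\<And>n. closedin T (c n)" "\<And>n y. y \<in> c n \<Longrightarrow> inv y \<notin> c n"
  obtains U :: "nat \<Rightarrow> 'a set" where "\<And>n. openin T (U n)" "\<And>n. closedin T (U n)"
    "\<And>x. x \<in> (\<Union>n. U n) \<Longrightarrow> inv x \<notin> (\<Union>n. U n)"
    "\<And>x. x \<in> (\<Union>n. c n) \<Longrightarrow> x \<in> (\<Union>n. U n) \<or> inv x \<in> (\<Union>n. U n)"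
proof -
  have c_sub: "c n \<subseteq> carrier G" for n
    using c(1) by (rule openin_subset_carrier)
  define D where "D n = c n \<union> (\<lambda>y. inv y) ` c n" for n
  have D_inv: "inv y \<in> D n \<longleftrightarrow> y \<in> D n" if "y \<in> carrier G" for y n
    using that inv_image_iff[OF c_sub, of y n] inv_image_iff[OF c_sub, of "inv y" n]
    unfolding D_def by auto
  have D_sub: "D n \<subseteq> carrier G" for n
    using c_sub unfolding D_def by auto
  define U where "U n = c n - (\<Union>k<n. D k)" for n
  have "openin T (U n)" for n
  proof -
    have "closedin T (D k)" for k
      unfolding D_def using c(2) by (intro closedin_Un closedin_inv_image)
    then have "closedin T (\<Union>k<n. D k)"
      by (intro closedin_Union) auto
    then show ?thesis
      unfolding U_def using c(1) by (rule openin_diff[rotated])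
  qed
  moreover have "closedin T (U n)" for n
  proof -
    have "openin T (D k)" for k
      unfolding D_def using c(1) by (intro openin_Un openin_inv_image)
    then have "openin T (\<Union>k<n. D k)"
      by (intro openin_Union) auto
    then show ?thesis
      unfolding U_def using c(2) by (rule closedin_diff[rotated])
  qed
  moreover have "inv x \<notin> (\<Union>n. U n)" if x: "x \<in> (\<Union>n. U n)" for x
  proof
    assume "inv x \<in> (\<Union>n. U n)"
    then obtain m where m: "inv x \<in> c m" "\<And>k. k < m \<Longrightarrow> inv x \<notin> D k"
      unfolding U_def by blast
    obtain n where n: "x \<in> c n" "\<And>k. k < n \<Longrightarrow> x \<notin> D k"
      using x unfolding U_def by blast
    have xG: "x \<in> carrier G"
      using n(1) c_sub by blast
    consider "m < n" | "m = n" | "n < m"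
      by linarith
    then show False
    proof cases
      case 1
      then show False
        using m(1) n(2) D_inv[OF xG, of m] unfolding D_def by blast
    next
      case 2
      then show False
        using m(1) n(1) c(3) by blast
    next
      case 3
      then show False
        using n(1) m(2) D_inv[OF xG, of n] unfolding D_def by blast
    qed
  qed
  moreover have "x \<in> (\<Union>n. U n) \<or> inv x \<in> (\<Union>n. U n)" if x: "x \<in> (\<Union>n. c n)" for x
  proof -
    obtain n where "x \<in> D n"
      using x unfolding D_def by blast
    define m where "m = (LEAST m. x \<in> D m)"
    have xm: "x \<in> D m"
      unfolding m_def by (rule LeastI) fact
    have before: "x \<notin> D k" if "k < m" for k
      using not_less_Least[of k "\<lambda>m. x \<in> D m"] that unfolding m_def by blast
    have xG: "x \<in> carrier G"
      using xm D_sub by blast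
    show ?thesis
    proof (cases "x \<in> c m")
      case True
      then have "x \<in> U m"
        using before unfolding U_def by blast
      then show ?thesis by blast
    next
      case False
      then have "inv x \<in> c m"
        using xm inv_image_iff[OF c_sub xG] unfolding D_def by blast
      moreover have "inv x \<notin> D k" if "k < m" for k
        using before[OF that] D_inv[OF xG] by blast
      ultimately have "inv x \<in> U m"
        unfolding U_def by blast
      then show ?thesis by blast
    qed
  qed
  ultimately show thesis
    using that by blast
qed

text \<open>The non-involutions form a Lindelof set, covered by countably many clopen sets meeting no
  pair \<open>{x, inv x}\<close> twice; their union \<open>U\<close> is a cozero set disjoint from its inverse, so the
  closures of \<open>U\<close> and \<open>inv ` U\<close> are disjoint, and by symmetry \<open>\<one>\<close> lies in neither.\<close>

lemma involution_nbhd: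
  assumes Lin: "Lindelof_space T" and bd: "basically_disconnected T"
    and Hd: "Hausdorff_space T" and one: "gdelta_in T {\<one>}"
  obtains U where "openin T U" "\<one> \<in> U" "\<And>x. x \<in> U \<Longrightarrow> x \<otimes> x = \<one>"
proof -
  have cr: "completely_regular_space T"
    using normal_imp_completely_regular_space[OF regular_Lindelof_imp_normal_space[OF regular_space Lin]]
      Hd Hausdorff_imp_t1_space by blast
  define W where "W = {x \<in> carrier G. x \<otimes> x \<noteq> \<one>}"
  define \<C> where "\<C> = {C. openin T C \<and> closedin T C \<and> (\<forall>y\<in>C. inv y \<notin> C)}"
  have W_cover: "W \<subseteq> \<Union>\<C>"
  proof
    fix x assume "x \<in> W"
    then obtain C where "openin T C" "closedin T C" "x \<in> C" "\<And>y. y \<in> C \<Longrightarrow> inv y \<notin> C"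
      using antisymmetric_clopen_nbhd[OF bd cr Hd] unfolding W_def by blast
    then show "x \<in> \<Union>\<C>"
      unfolding \<C>_def by blast
  qed
  have W_sub: "W \<subseteq> topspace T"
    unfolding W_def by auto
  have "Lindelof_space (subtopology T W)"
    unfolding W_def using Lin one by (rule Lindelof_space_non_involutions)
  moreover have "\<forall>C\<in>\<C>. openin T C"
    unfolding \<C>_def by blast
  ultimately have "\<exists>\<V>. countable \<V> \<and> \<V> \<subseteq> \<C> \<and> W \<subseteq> \<Union>\<V>"
    using W_cover unfolding Lindelof_space_subtopology_subset[OF W_sub] by blast
  then obtain \<V> where \<V>: "countable \<V>" "\<V> \<subseteq> \<C>" "W \<subseteq> \<Union>\<V>"
    by (elim exE conjE)
  define c where "c = from_nat_into (insert {} \<V>)"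
  have "range c = insert {} \<V>"
    unfolding c_def using \<V>(1) by (intro range_from_nat_into) auto
  moreover have "{} \<in> \<C>"
    unfolding \<C>_def by simp
  ultimately have c: "c n \<in> \<C>" for n
    using \<V>(2) by (metis insert_subset rangeI subsetD)
  have W_c: "W \<subseteq> (\<Union>n. c n)"
    using \<V>(3) \<open>range c = insert {} \<V>\<close> by auto
  obtain U :: "nat \<Rightarrow> 'a set" where U: "\<And>n. openin T (U n)" "\<And>n. closedin T (U n)"
    "\<And>x. x \<in> (\<Union>n. U n) \<Longrightarrow> inv x \<notin> (\<Union>n. U n)"
    "\<And>x. x \<in> (\<Union>n. c n) \<Longrightarrow> x \<in> (\<Union>n. U n) \<or> inv x \<in> (\<Union>n. U n)"
    using clopen_cover_split_by_inversion[of c] c unfolding \<C>_def by blast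
  define UU where "UU = (\<Union>n. U n)"
  have UU_sub: "UU \<subseteq> carrier G"
    unfolding UU_def using U(1) openin_subset_carrier by blast
  have inv_UU: "x \<in> (\<lambda>x. inv x) ` UU \<longleftrightarrow> inv x \<in> UU" if "x \<in> carrier G" for x
    using UU_sub that by (rule inv_image_iff)
  have "cozero_set_in T UU"
    unfolding UU_def using U(1,2) by (rule cozero_set_in_Union_clopen)
  moreover have "openin T ((\<lambda>x. inv x) ` UU)"
    unfolding UU_def using U(1) by (intro openin_inv_image openin_Union) auto
  moreover have "UU \<inter> (\<lambda>x. inv x) ` UU = {}"
    using U(3) inv_UU UU_sub unfolding UU_def by blast
  ultimately have disj: "T closure_of UU \<inter> T closure_of ((\<lambda>x. inv x) ` UU) = {}"
    by (rule basically_disconnected_disjoint_closures[OF bd])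
  have "T closure_of UU \<subseteq> carrier G"
    using closure_of_subset_topspace[of T UU] by simp
  then have cl_inv: "\<one> \<in> T closure_of ((\<lambda>x. inv x) ` UU) \<longleftrightarrow> \<one> \<in> T closure_of UU"
    by (simp add: closure_of_inv_image[OF UU_sub] inv_image_iff)
  have "W \<subseteq> UU \<union> (\<lambda>x. inv x) ` UU"
  proof
    fix x assume x: "x \<in> W"
    then have "x \<in> UU \<or> inv x \<in> UU"
      using W_c U(4) unfolding UU_def by blast
    then show "x \<in> UU \<union> (\<lambda>x. inv x) ` UU"
      using x inv_UU unfolding W_def by blast
  qed
  then have "T closure_of W \<subseteq> T closure_of UU \<union> T closure_of ((\<lambda>x. inv x) ` UU)"
    using closure_of_mono by (metis closure_of_Un)
  then have no_one: "\<one> \<notin> T closure_of W"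
    using disj cl_inv by blast
  show thesis
  proof (rule that)
    show "openin T (topspace T - T closure_of W)"
      by (rule openin_diff[OF openin_topspace closedin_closure_of])
    show "\<one> \<in> topspace T - T closure_of W"
      using no_one by simp
    show "x \<otimes> x = \<one>" if "x \<in> topspace T - T closure_of W" for x
      using that closure_of_subset[of W T] unfolding W_def by auto
  qed
qed

end

lemma countable_closure_under:
  fixes f :: "'b \<Rightarrow> nat \<Rightarrow> 'b"
  assumes B: "countable B" "\<And>x. x \<in> B \<Longrightarrow> P x" and f: "\<And>x i. P x \<Longrightarrow> P (f x i)"
  obtains C where "countable C" "B \<subseteq> C" "\<And>x i. x \<in> C \<Longrightarrow> f x i \<in> C" "\<And>x. x \<in> C \<Longrightarrow> P x"
proof
  define C where "C = (\<lambda>(b, is). foldl f b is) ` (B \<times> UNIV)"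
  show "countable C"
    unfolding C_def using B(1) by simp
  show "B \<subseteq> C"
    unfolding C_def by (force intro: image_eqI[of _ _ "(b, [])" for b])
  show "f x i \<in> C" if x: "x \<in> C" for x i
  proof -
    obtain b "is" where "b \<in> B" "x = foldl f b is"
      using x unfolding C_def by auto
    then have "f x i = foldl f b (is @ [i])"
      by simp
    then show ?thesis
      unfolding C_def using \<open>b \<in> B\<close> by (auto intro: image_eqI[of _ _ "(b, is @ [i])"])
  qed
  have "P (foldl f b is)" if "P b" for b "is"
    using that f by (induction "is" arbitrary: b) simp_all
  then show "P x" if "x \<in> C" for x
    using that B(2) unfolding C_def by auto
qed

context topgroup
begin

lemma Lindelof_conjugation_nbhds:
  assumes Lin: "Lindelof_space T" and U: "openin T U" "\<one> \<in> U"
  shows "\<exists>Q :: nat \<Rightarrow> 'a set. (\<forall>i. openin T (Q i) \<and> \<one> \<in> Q i) \<and>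
    (\<forall>g\<in>carrier G. \<exists>i. \<forall>a\<in>Q i. g \<otimes> a \<otimes> inv g \<in> U)"
proof -
  have "\<exists>Q. openin T Q \<and> \<one> \<in> Q \<and> (\<forall>q\<in>Q. \<forall>r\<in>Q. y \<otimes> (q \<otimes> r \<otimes> inv q) \<otimes> inv y \<in> U)"
    if y: "y \<in> carrier G" for y
  proof -
    define P where "P = {z \<in> topspace T. y \<otimes> z \<otimes> inv y \<in> U}"
    have "continuous_map T T (\<lambda>z. y \<otimes> z \<otimes> inv y)"
      using y by (intro continuous_map_mult_fun continuous_map_lmult continuous_map_id[unfolded id_def])
        (auto simp: continuous_map_const)
    then have "openin T P"
      unfolding P_def using U(1) by (rule openin_continuous_map_preimage)
    moreover have "\<one> \<in> P"
      unfolding P_def using y U(2) by simp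
    ultimately obtain V where V: "openin T V" "\<one> \<in> V" "\<And>a. a \<in> V \<Longrightarrow> inv a \<in> V"
      "\<And>a b. a \<in> V \<Longrightarrow> b \<in> V \<Longrightarrow> a \<otimes> b \<in> P"
      using symmetric_square_nbhd by blast
    obtain Q where Q: "openin T Q" "\<one> \<in> Q" "\<And>a. a \<in> Q \<Longrightarrow> inv a \<in> Q"
      "\<And>a b. a \<in> Q \<Longrightarrow> b \<in> Q \<Longrightarrow> a \<otimes> b \<in> V"
      using symmetric_square_nbhd[OF V(1,2)] by blast
    have Q_sub: "Q \<subseteq> V"
    proof
      fix q assume "q \<in> Q"
      then have "q \<otimes> \<one> \<in> V"
        using Q(2,4) by blast
      then show "q \<in> V"
        using \<open>q \<in> Q\<close> Q(1) openin_subset_carrier by (metis r_one subsetD)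
    qed
    have "y \<otimes> (q \<otimes> r \<otimes> inv q) \<otimes> inv y \<in> U" if "q \<in> Q" "r \<in> Q" for q r
    proof -
      have "q \<otimes> r \<otimes> inv q \<in> P"
        using V(4) Q(4)[OF that] Q_sub Q(3)[OF that(1)] by blast
      then show ?thesis
        unfolding P_def by blast
    qed
    then show ?thesis
      using Q(1,2) by blast
  qed
  then obtain Qf where Qf: "\<And>y. y \<in> carrier G \<Longrightarrow> openin T (Qf y) \<and> \<one> \<in> Qf y \<and>
      (\<forall>q\<in>Qf y. \<forall>r\<in>Qf y. y \<otimes> (q \<otimes> r \<otimes> inv q) \<otimes> inv y \<in> U)"
    by metis
  define \<U> where "\<U> = (\<lambda>y. (\<lambda>q. y \<otimes> q) ` Qf y) ` carrier G"
  have "openin T W" if W: "W \<in> \<U>" for W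
  proof -
    obtain y where "y \<in> carrier G" "W = (\<lambda>q. y \<otimes> q) ` Qf y"
      using W unfolding \<U>_def by (elim imageE)
    then show ?thesis
      using Qf openin_lmult_image by simp
  qed
  moreover have "\<Union>\<U> = topspace T"
  proof (intro equalityI subsetI)
    fix x assume "x \<in> \<Union>\<U>"
    then show "x \<in> topspace T"
      using \<open>\<And>W. W \<in> \<U> \<Longrightarrow> openin T W\<close> openin_subset by blast
  next
    fix x assume "x \<in> topspace T"
    then have "x \<in> carrier G" "x \<in> (\<lambda>q. x \<otimes> q) ` Qf x"
      using Qf lmult_image_one by auto
    then show "x \<in> \<Union>\<U>"
      unfolding \<U>_def by blast
  qed
  ultimately have "\<exists>\<V>. countable \<V> \<and> \<V> \<subseteq> \<U> \<and> \<Union>\<V> = topspace T"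
    by (rule Lindelof_spaceD[OF Lin])
  then obtain \<V> where \<V>: "countable \<V>" "\<V> \<subseteq> \<U>" "\<Union>\<V> = topspace T"
    by (elim exE conjE)
  then have "countable \<V> \<and> \<V> \<subseteq> (\<lambda>y. (\<lambda>q. y \<otimes> q) ` Qf y) ` carrier G"
    unfolding \<U>_def by blast
  then obtain Y where Y: "countable Y" "Y \<subseteq> carrier G" "\<V> = (\<lambda>y. (\<lambda>q. y \<otimes> q) ` Qf y) ` Y"
    unfolding countable_subset_image by (elim exE conjE)
  have "Y \<noteq> {}"
  proof
    assume "Y = {}"
    then have "\<Union>\<V> = {}"
      using Y(3) by simp
    then show False
      using \<V>(3) one_closed by (metis empty_iff topspace_eq)
  qed
  have Y_nat: "from_nat_into Y i \<in> carrier G" for i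
    using Y(2) from_nat_into[OF \<open>Y \<noteq> {}\<close>] by (rule subsetD)
  show ?thesis
  proof (intro exI[of _ "\<lambda>i. Qf (from_nat_into Y i)"] conjI allI ballI)
    fix i
    show "openin T (Qf (from_nat_into Y i))" "\<one> \<in> Qf (from_nat_into Y i)"
      using Qf[OF Y_nat] by auto
  next
    fix g assume g: "g \<in> carrier G"
    then have "g \<in> (\<Union>y\<in>Y. (\<lambda>q. y \<otimes> q) ` Qf y)"
      using \<V>(3) Y(3) by simp
    then obtain y q where yq: "y \<in> Y" "q \<in> Qf y" "g = y \<otimes> q"
      by (elim UN_E imageE) blast
    obtain i where i: "from_nat_into Y i = y"
      using from_nat_into_surj[OF Y(1) yq(1)] by blast
    have yG: "y \<in> carrier G"
      using yq(1) Y(2) by blast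
    have Qy_sub: "Qf y \<subseteq> carrier G"
      using Qf[OF yG] openin_subset_carrier by blast
    have "g \<otimes> a \<otimes> inv g \<in> U" if a: "a \<in> Qf y" for a
    proof -
      have "g \<otimes> a \<otimes> inv g = y \<otimes> (q \<otimes> a \<otimes> inv q) \<otimes> inv y"
        using yG Qy_sub yq(2,3) a by (simp add: inv_mult_group m_assoc subset_iff)
      also have "\<dots> \<in> U"
        using Qf[OF yG] yq(2) a by blast
      finally show ?thesis .
    qed
    then show "\<exists>i. \<forall>a\<in>Qf (from_nat_into Y i). g \<otimes> a \<otimes> inv g \<in> U"
      using i by blast
  qed
qed

lemma normal_closed_Inter_nbhds:
  assumes ne: "\<N> \<noteq> {}" and nb: "\<And>U. U \<in> \<N> \<Longrightarrow> openin T U \<and> \<one> \<in> U"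
    and sq: "\<And>U. U \<in> \<N> \<Longrightarrow> \<exists>V\<in>\<N>. (\<forall>a\<in>V. inv a \<in> V) \<and> (\<forall>a\<in>V. \<forall>b\<in>V. a \<otimes> b \<in> U)"
    and conj: "\<And>U g. U \<in> \<N> \<Longrightarrow> g \<in> carrier G \<Longrightarrow> \<exists>V\<in>\<N>. \<forall>a\<in>V. g \<otimes> a \<otimes> inv g \<in> U"
  shows "\<Inter>\<N> \<lhd> G" and "closedin T (\<Inter>\<N>)"
proof -
  have nb_sub: "U \<subseteq> carrier G" if "U \<in> \<N>" for U
    using nb[OF that] openin_subset_carrier by blast
  have N_sub: "\<Inter>\<N> \<subseteq> carrier G"
    using ne nb_sub by blast
  have "subgroup (\<Inter>\<N>) G"
  proof (rule subgroupI[OF N_sub])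
    show "\<Inter>\<N> \<noteq> {}"
      using nb by blast
  next
    fix a assume a: "a \<in> \<Inter>\<N>"
    show "inv a \<in> \<Inter>\<N>"
    proof
      fix U assume "U \<in> \<N>"
      then obtain V where V: "V \<in> \<N>" "\<forall>a\<in>V. inv a \<in> V" "\<forall>a\<in>V. \<forall>b\<in>V. a \<otimes> b \<in> U"
        using sq by blast
      then have "inv a \<otimes> \<one> \<in> U"
        using a nb by blast
      then show "inv a \<in> U"
        using a N_sub by (simp add: subset_iff)
    qed
  next
    fix a b assume ab: "a \<in> \<Inter>\<N>" "b \<in> \<Inter>\<N>"
    show "a \<otimes> b \<in> \<Inter>\<N>"
    proof
      fix U assume "U \<in> \<N>"
      then obtain V where "V \<in> \<N>" "\<forall>a\<in>V. \<forall>b\<in>V. a \<otimes> b \<in> U"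
        using sq by blast
      then show "a \<otimes> b \<in> U"
        using ab by blast
    qed
  qed
  moreover have "g \<otimes> h \<otimes> inv g \<in> \<Inter>\<N>" if "g \<in> carrier G" "h \<in> \<Inter>\<N>" for g h
    using conj[OF _ that(1)] that(2) by blast
  ultimately show "\<Inter>\<N> \<lhd> G"
    by (rule normal_invI)
  have "openin T (topspace T - \<Inter>\<N>)"
  proof (subst openin_subopen, intro ballI)
    fix y assume y: "y \<in> topspace T - \<Inter>\<N>"
    then obtain U where U: "U \<in> \<N>" "y \<notin> U"
      by blast
    then obtain V where V: "V \<in> \<N>" "\<forall>a\<in>V. inv a \<in> V" "\<forall>a\<in>V. \<forall>b\<in>V. a \<otimes> b \<in> U"
      using sq by blast
    have yG: "y \<in> carrier G"
      using y by simp
    have "(\<lambda>v. y \<otimes> v) ` V \<subseteq> topspace T - \<Inter>\<N>"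
    proof
      fix w assume "w \<in> (\<lambda>v. y \<otimes> v) ` V"
      then obtain v where v: "v \<in> V" "w = y \<otimes> v"
        by (elim imageE)
      have vG: "v \<in> carrier G"
        using v(1) nb_sub[OF V(1)] by (rule subsetD[rotated])
      have "w \<notin> \<Inter>\<N>"
      proof
        assume "w \<in> \<Inter>\<N>"
        then have "w \<otimes> inv v \<in> U"
          using V v(1) by blast
        moreover have "w \<otimes> inv v = y"
          using v(2) yG vG by (simp add: m_assoc)
        ultimately show False
          using U(2) by simp
      qed
      then show "w \<in> topspace T - \<Inter>\<N>"
        using v(2) yG vG by simp
    qed
    moreover have "openin T ((\<lambda>v. y \<otimes> v) ` V)" "y \<in> (\<lambda>v. y \<otimes> v) ` V"
      using nb[OF V(1)] yG by (simp_all add: openin_lmult_image lmult_image_one)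
    ultimately show "\<exists>W. openin T W \<and> y \<in> W \<and> W \<subseteq> topspace T - \<Inter>\<N>"
      by blast
  qed
  then show "closedin T (\<Inter>\<N>)"
    using N_sub by (simp add: closedin_def)
qed

lemma not_P_space_Gdelta_nbhds:
  assumes "\<not> P_space T"
  obtains \<O> where "countable \<O>" "\<And>U. U \<in> \<O> \<Longrightarrow> openin T U \<and> \<one> \<in> U"
    "\<And>V. openin T V \<Longrightarrow> \<one> \<in> V \<Longrightarrow> \<not> V \<subseteq> \<Inter>\<O>"
proof -
  obtain S where S: "gdelta_in T S" "\<not> openin T S"
    using assms unfolding P_space_def by blast
  then obtain \<S> where \<S>: "countable \<S>" "\<And>U. U \<in> \<S> \<Longrightarrow> openin T U" "\<Inter>\<S> = S"
    unfolding gdelta_in_alt intersection_of_def by auto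
  obtain x where x: "x \<in> S" "\<And>W. openin T W \<Longrightarrow> x \<in> W \<Longrightarrow> \<not> W \<subseteq> S"
    using S(2) openin_subopen[of T S] by blast
  have xG: "x \<in> carrier G"
    using x(1) gdelta_in_subset[OF S(1)] by auto
  define \<O> where "\<O> = (\<lambda>U. (\<lambda>z. inv x \<otimes> z) ` U) ` \<S>"
  show thesis
  proof (rule that)
    show "countable \<O>"
      unfolding \<O>_def using \<S>(1) by simp
    show "openin T U \<and> \<one> \<in> U" if U: "U \<in> \<O>" for U
    proof -
      obtain W where W: "W \<in> \<S>" "U = (\<lambda>z. inv x \<otimes> z) ` W"
        using U unfolding \<O>_def by (elim imageE)
      then have "x \<in> W"
        using x(1) \<S>(3) by blast
      then have "\<one> \<in> U"
        using W(2) xG by (auto intro: image_eqI[of _ _ x])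
      then show ?thesis
        using W \<S>(2) xG by (simp add: openin_lmult_image)
    qed
    show "\<not> V \<subseteq> \<Inter>\<O>" if V: "openin T V" "\<one> \<in> V" for V
    proof
      assume V_sub: "V \<subseteq> \<Inter>\<O>"
      have "(\<lambda>v. x \<otimes> v) ` V \<subseteq> S"
      proof
        fix w assume "w \<in> (\<lambda>v. x \<otimes> v) ` V"
        then obtain v where v: "v \<in> V" "w = x \<otimes> v"
          by (elim imageE)
        have "w \<in> W" if W: "W \<in> \<S>" for W
        proof -
          have "v \<in> (\<lambda>z. inv x \<otimes> z) ` W"
            using V_sub v(1) W unfolding \<O>_def by blast
          then obtain u where u: "u \<in> W" "v = inv x \<otimes> u"
            by (elim imageE)
          have "u \<in> carrier G"
            using u(1) W \<S>(2) openin_subset_carrier by blast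
          then show ?thesis
            using u v(2) xG by (simp add: m_assoc[symmetric])
        qed
        then show "w \<in> S"
          using \<S>(3) by blast
      qed
      moreover have "openin T ((\<lambda>v. x \<otimes> v) ` V)" "x \<in> (\<lambda>v. x \<otimes> v) ` V"
        using V xG by (simp_all add: openin_lmult_image lmult_image_one)
      ultimately show False
        using x(2) by blast
    qed
  qed
qed

lemma Lindelof_Gdelta_normal_subgroup:
  assumes Lin: "Lindelof_space T"
    and \<O>: "countable \<O>" "\<And>U. U \<in> \<O> \<Longrightarrow> openin T U \<and> \<one> \<in> U"
  obtains \<N> where "countable \<N>" "\<N> \<noteq> {}" "\<O> \<subseteq> \<N>" "\<And>U. U \<in> \<N> \<Longrightarrow> openin T U \<and> \<one> \<in> U"
    "\<And>U. U \<in> \<N> \<Longrightarrow> \<exists>V\<in>\<N>. \<forall>a\<in>V. \<forall>b\<in>V. a \<otimes> b \<in> U"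
    "\<Inter>\<N> \<lhd> G" "closedin T (\<Inter>\<N>)"
proof -
  define nbhd where "nbhd U \<longleftrightarrow> openin T U \<and> \<one> \<in> U" for U
  define sq where "sq U = (SOME V. nbhd V \<and> (\<forall>a\<in>V. inv a \<in> V) \<and> (\<forall>a\<in>V. \<forall>b\<in>V. a \<otimes> b \<in> U))"
    for U
  define cj where "cj U = (SOME Q :: nat \<Rightarrow> 'a set. (\<forall>i. openin T (Q i) \<and> \<one> \<in> Q i) \<and>
      (\<forall>g\<in>carrier G. \<exists>i. \<forall>a\<in>Q i. g \<otimes> a \<otimes> inv g \<in> U))" for U
  have sq: "nbhd (sq U) \<and> (\<forall>a\<in>sq U. inv a \<in> sq U) \<and> (\<forall>a\<in>sq U. \<forall>b\<in>sq U. a \<otimes> b \<in> U)"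
    if "nbhd U" for U
  proof -
    obtain V where "openin T V" "\<one> \<in> V" "\<And>a. a \<in> V \<Longrightarrow> inv a \<in> V"
      "\<And>a b. a \<in> V \<Longrightarrow> b \<in> V \<Longrightarrow> a \<otimes> b \<in> U"
      using symmetric_square_nbhd \<open>nbhd U\<close> unfolding nbhd_def by blast
    then have "\<exists>V. nbhd V \<and> (\<forall>a\<in>V. inv a \<in> V) \<and> (\<forall>a\<in>V. \<forall>b\<in>V. a \<otimes> b \<in> U)"
      unfolding nbhd_def by blast
    then show ?thesis
      unfolding sq_def by (rule someI_ex)
  qed
  have cj: "(\<forall>i. nbhd (cj U i)) \<and> (\<forall>g\<in>carrier G. \<exists>i. \<forall>a\<in>cj U i. g \<otimes> a \<otimes> inv g \<in> U)"
    if "nbhd U" for U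
  proof -
    have "openin T U" "\<one> \<in> U"
      using that unfolding nbhd_def by auto
    then have "\<exists>Q :: nat \<Rightarrow> 'a set. (\<forall>i. openin T (Q i) \<and> \<one> \<in> Q i) \<and>
        (\<forall>g\<in>carrier G. \<exists>i. \<forall>a\<in>Q i. g \<otimes> a \<otimes> inv g \<in> U)"
      by (rule Lindelof_conjugation_nbhds[OF Lin])
    from someI_ex[OF this] show ?thesis
      unfolding cj_def nbhd_def .
  qed
  define step where "step U i = (case i of 0 \<Rightarrow> sq U | Suc j \<Rightarrow> cj U j)" for U i
  have step_nbhd: "nbhd (step U i)" if "nbhd U" for U i
    using sq[OF that] cj[OF that] unfolding step_def by (cases i) auto
  have B_countable: "countable (insert (carrier G) \<O>)"
    using \<O>(1) by simp
  have B_nbhd: "nbhd U" if "U \<in> insert (carrier G) \<O>" for U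
    using that \<O>(2) openin_topspace[of T] unfolding nbhd_def by auto
  obtain \<N> where \<N>: "countable \<N>" "insert (carrier G) \<O> \<subseteq> \<N>"
    "\<And>U i. U \<in> \<N> \<Longrightarrow> step U i \<in> \<N>" "\<And>U. U \<in> \<N> \<Longrightarrow> nbhd U"
    using countable_closure_under[where P = nbhd and f = step, OF B_countable B_nbhd step_nbhd] by metis
  have sq_N: "\<exists>V\<in>\<N>. (\<forall>a\<in>V. inv a \<in> V) \<and> (\<forall>a\<in>V. \<forall>b\<in>V. a \<otimes> b \<in> U)" if "U \<in> \<N>" for U
    using \<N>(3)[OF that, of 0] sq[OF \<N>(4)[OF that]] unfolding step_def by auto
  have cj_N: "\<exists>V\<in>\<N>. \<forall>a\<in>V. g \<otimes> a \<otimes> inv g \<in> U" if U: "U \<in> \<N>" and g: "g \<in> carrier G" for U g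
  proof -
    obtain i where "\<forall>a\<in>cj U i. g \<otimes> a \<otimes> inv g \<in> U"
      using cj[OF \<N>(4)[OF U]] g by blast
    moreover have "cj U i \<in> \<N>"
      using \<N>(3)[OF U, of "Suc i"] unfolding step_def by simp
    ultimately show ?thesis
      by blast
  qed
  have ne: "\<N> \<noteq> {}"
    using \<N>(2) by blast
  have nb: "openin T U \<and> \<one> \<in> U" if "U \<in> \<N>" for U
    using \<N>(4)[OF that] unfolding nbhd_def .
  show thesis
  proof (rule that)
    show "countable \<N>" "\<N> \<noteq> {}"
      by (fact \<N>(1) ne)+
    show "\<O> \<subseteq> \<N>"
      using \<N>(2) by (rule subset_trans[OF subset_insertI])
    show "openin T U \<and> \<one> \<in> U" if "U \<in> \<N>" for U
      using that by (rule nb)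
    show "\<exists>V\<in>\<N>. \<forall>a\<in>V. \<forall>b\<in>V. a \<otimes> b \<in> U" if "U \<in> \<N>" for U
      using sq_N[OF that] by blast
    show "\<Inter>\<N> \<lhd> G" "closedin T (\<Inter>\<N>)"
      using normal_closed_Inter_nbhds[OF ne nb sq_N cj_N] by auto
  qed
qed

end

text \<open>The quotient \<open>G/N\<close> is built on the carrier type of \<open>G\<close>: each coset \<open>N #> x\<close> is represented by
  the chosen element \<open>rep x\<close> of it.\<close>

locale topgroup_quotient = topgroup +
  fixes N :: "'a set"
  assumes normal_N: "N \<lhd> G" and closedin_N: "closedin T N"
begin

lemma subgroup_N: "subgroup N G"
  using normal_N by (rule normal_imp_subgroup)

definition rep :: "'a \<Rightarrow> 'a"
  where "rep x = (SOME y. y \<in> N #> x)"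

lemma rep_in_coset: "x \<in> carrier G \<Longrightarrow> rep x \<in> N #> x"
  unfolding rep_def using rcos_self[OF _ subgroup_N] by (rule someI)

lemma rep_closed [simp]: "x \<in> carrier G \<Longrightarrow> rep x \<in> carrier G"
  using subgroup.elemrcos_carrier[OF subgroup_N is_group _ rep_in_coset] by blast

lemma rep_eq_iff:
  assumes x: "x \<in> carrier G" and y: "y \<in> carrier G"
  shows "rep x = rep y \<longleftrightarrow> x \<otimes> inv y \<in> N"
proof -
  have "N #> z = N #> rep z" if "z \<in> carrier G" for z
    using repr_independence[OF rep_in_coset[OF that] that subgroup_N] .
  then have "rep x = rep y \<longleftrightarrow> N #> x = N #> y"
    using x y unfolding rep_def by metis
  also have "\<dots> \<longleftrightarrow> x \<in> N #> y"
    using repr_independence[OF _ y subgroup_N] repr_independenceD[OF subgroup_N x] by metis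
  also have "\<dots> \<longleftrightarrow> x \<otimes> inv y \<in> N"
    using subgroup.rcos_module[OF subgroup_N is_group y x] .
  finally show ?thesis .
qed

lemma rep_rep: "x \<in> carrier G \<Longrightarrow> rep (rep x) = rep x"
  using rep_eq_iff[OF rep_closed] rep_in_coset subgroup.rcos_module_imp[OF subgroup_N is_group]
  by blast

lemma rep_mult_left [simp]:
  assumes "x \<in> carrier G" "y \<in> carrier G"
  shows "rep (rep x \<otimes> y) = rep (x \<otimes> y)"
proof -
  have "(rep x \<otimes> y) \<otimes> inv (x \<otimes> y) = rep x \<otimes> inv x"
    using assms by (simp add: inv_mult_group m_assoc)
  also have "\<dots> \<in> N"
    using subgroup.rcos_module_imp[OF subgroup_N is_group assms(1) rep_in_coset[OF assms(1)]] .
  finally show ?thesis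
    using assms rep_closed by (simp add: rep_eq_iff)
qed

lemma rep_mult_right [simp]:
  assumes "x \<in> carrier G" "y \<in> carrier G"
  shows "rep (x \<otimes> rep y) = rep (x \<otimes> y)"
proof -
  have "(x \<otimes> rep y) \<otimes> inv (x \<otimes> y) = x \<otimes> (rep y \<otimes> inv y) \<otimes> inv x"
    using assms rep_closed by (simp add: inv_mult_group m_assoc)
  also have "\<dots> \<in> N"
    using normal.inv_op_closed2[OF normal_N assms(1)]
      subgroup.rcos_module_imp[OF subgroup_N is_group assms(2) rep_in_coset[OF assms(2)]] .
  finally show ?thesis
    using assms rep_closed by (simp add: rep_eq_iff)
qed

definition quotient_group :: "'a monoid"
  where "quotient_group = \<lparr>carrier = rep ` carrier G, mult = (\<lambda>a b. rep (a \<otimes> b)), one = rep \<one>\<rparr>"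

lemma quotient_group_simps [simp]:
  "carrier quotient_group = rep ` carrier G"
  "mult quotient_group = (\<lambda>a b. rep (a \<otimes> b))"
  "one quotient_group = rep \<one>"
  by (simp_all add: quotient_group_def)

lemma group_quotient_group: "group quotient_group"
proof (rule groupI)
  fix a b c assume "a \<in> carrier quotient_group" "b \<in> carrier quotient_group" "c \<in> carrier quotient_group"
  then obtain x y z where "x \<in> carrier G" "y \<in> carrier G" "z \<in> carrier G" "a = rep x" "b = rep y" "c = rep z"
    by auto
  then show "a \<otimes>\<^bsub>quotient_group\<^esub> b \<otimes>\<^bsub>quotient_group\<^esub> c = a \<otimes>\<^bsub>quotient_group\<^esub> (b \<otimes>\<^bsub>quotient_group\<^esub> c)"
    by (simp add: m_assoc)
next
  fix a assume "a \<in> carrier quotient_group"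
  then obtain x where x: "x \<in> carrier G" "a = rep x"
    by auto
  then show "\<one>\<^bsub>quotient_group\<^esub> \<otimes>\<^bsub>quotient_group\<^esub> a = a"
    by simp
  have "rep (inv x) \<otimes>\<^bsub>quotient_group\<^esub> a = \<one>\<^bsub>quotient_group\<^esub>"
    using x by simp
  then show "\<exists>b\<in>carrier quotient_group. b \<otimes>\<^bsub>quotient_group\<^esub> a = \<one>\<^bsub>quotient_group\<^esub>"
    using x by (intro bexI[of _ "rep (inv x)"]) simp_all
qed (auto simp: rep_closed)

lemma inv_quotient_group: "x \<in> carrier G \<Longrightarrow> inv\<^bsub>quotient_group\<^esub> (rep x) = rep (inv x)"
  by (rule group.inv_equality[OF group_quotient_group]) simp_all

definition quotient_topology :: "'a topology"
  where "quotient_topology = topology (\<lambda>A. A \<subseteq> rep ` carrier G \<and> openin T {x \<in> carrier G. rep x \<in> A})"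

lemma openin_quotient_topology:
  "openin quotient_topology A \<longleftrightarrow> A \<subseteq> rep ` carrier G \<and> openin T {x \<in> carrier G. rep x \<in> A}"
proof -
  have "istopology (\<lambda>A. A \<subseteq> rep ` carrier G \<and> openin T {x \<in> carrier G. rep x \<in> A})"
    unfolding istopology_def
  proof (rule conjI; intro allI impI)
    fix A B assume "A \<subseteq> rep ` carrier G \<and> openin T {x \<in> carrier G. rep x \<in> A}"
      "B \<subseteq> rep ` carrier G \<and> openin T {x \<in> carrier G. rep x \<in> B}"
    moreover have "{x \<in> carrier G. rep x \<in> A \<inter> B} = {x \<in> carrier G. rep x \<in> A} \<inter> {x \<in> carrier G. rep x \<in> B}"
      by blast
    ultimately show "A \<inter> B \<subseteq> rep ` carrier G \<and> openin T {x \<in> carrier G. rep x \<in> A \<inter> B}"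
      by auto
  next
    fix \<A> assume \<A>: "\<forall>A\<in>\<A>. A \<subseteq> rep ` carrier G \<and> openin T {x \<in> carrier G. rep x \<in> A}"
    have "{x \<in> carrier G. rep x \<in> \<Union>\<A>} = (\<Union>A\<in>\<A>. {x \<in> carrier G. rep x \<in> A})"
      by blast
    then show "\<Union>\<A> \<subseteq> rep ` carrier G \<and> openin T {x \<in> carrier G. rep x \<in> \<Union>\<A>}"
      using \<A> by (auto intro!: openin_Union)
  qed
  then show ?thesis
    unfolding quotient_topology_def by simp
qed

lemma topspace_quotient_topology [simp]: "topspace quotient_topology = rep ` carrier G"
proof -
  have "openin quotient_topology (rep ` carrier G)"
  proof -
    have "{x \<in> carrier G. rep x \<in> rep ` carrier G} = topspace T"
      by auto
    then show ?thesis
      unfolding openin_quotient_topology using openin_topspace[of T] by simp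
  qed
  then show ?thesis
    using openin_subset openin_quotient_topology[of "topspace quotient_topology"] by blast
qed

lemma continuous_map_rep: "continuous_map T quotient_topology rep"
  unfolding continuous_map_def openin_quotient_topology by auto

lemma rep_preimage_rep_image:
  assumes "S \<subseteq> carrier G"
  shows "{x \<in> carrier G. rep x \<in> rep ` S} = (\<Union>n\<in>N. (\<lambda>s. n \<otimes> s) ` S)"
proof (intro equalityI subsetI)
  fix x assume "x \<in> {x \<in> carrier G. rep x \<in> rep ` S}"
  then obtain s where x: "x \<in> carrier G" and s: "s \<in> S" "rep x = rep s"
    by blast
  have sG: "s \<in> carrier G"
    using s(1) assms by blast
  have "x \<otimes> inv s \<in> N"
    using s(2) rep_eq_iff[OF x sG] by simp
  moreover have "x = (x \<otimes> inv s) \<otimes> s"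
    using x sG by (simp add: m_assoc)
  ultimately show "x \<in> (\<Union>n\<in>N. (\<lambda>s. n \<otimes> s) ` S)"
    using s(1) by blast
next
  fix x assume "x \<in> (\<Union>n\<in>N. (\<lambda>s. n \<otimes> s) ` S)"
  then obtain n s where n: "n \<in> N" and s: "s \<in> S" and x: "x = n \<otimes> s"
    by blast
  have G: "n \<in> carrier G" "s \<in> carrier G"
    using subgroup.mem_carrier[OF subgroup_N n] s assms by auto
  have "rep x = rep s"
    using x G n rep_eq_iff[of x s] by (simp add: m_assoc)
  then show "x \<in> {x \<in> carrier G. rep x \<in> rep ` S}"
    using x G s by auto
qed

lemma open_map_rep: "open_map T quotient_topology rep"
  unfolding open_map_def
proof (intro allI impI)
  fix U assume U: "openin T U"
  have U_sub: "U \<subseteq> carrier G"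
    using U by (rule openin_subset_carrier)
  have "openin T ((\<lambda>s. n \<otimes> s) ` U)" if "n \<in> N" for n
    using U subgroup.mem_carrier[OF subgroup_N that] by (rule openin_lmult_image)
  then have "openin T {x \<in> carrier G. rep x \<in> rep ` U}"
    unfolding rep_preimage_rep_image[OF U_sub] by (intro openin_Union) blast
  then show "openin quotient_topology (rep ` U)"
    unfolding openin_quotient_topology using U_sub by blast
qed

lemma topological_group_quotient: "topological_group quotient_group quotient_topology"
  unfolding topological_group_def
proof (intro conjI)
  show "group quotient_group" by (rule group_quotient_group)
  show "topspace quotient_topology = carrier quotient_group" by simp
  show "continuous_map (prod_topology quotient_topology quotient_topology) quotient_topology
      (\<lambda>p. fst p \<otimes>\<^bsub>quotient_group\<^esub> snd p)"
    unfolding continuous_map_def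
  proof (intro conjI allI impI)
    show "(\<lambda>p. fst p \<otimes>\<^bsub>quotient_group\<^esub> snd p)
        \<in> topspace (prod_topology quotient_topology quotient_topology) \<rightarrow> topspace quotient_topology"
      using rep_closed by auto
    fix A assume A: "openin quotient_topology A"
    let ?S = "{p \<in> topspace (prod_topology quotient_topology quotient_topology).
      fst p \<otimes>\<^bsub>quotient_group\<^esub> snd p \<in> A}"
    have P: "openin T {z \<in> carrier G. rep z \<in> A}"
      using A unfolding openin_quotient_topology by blast
    show "openin (prod_topology quotient_topology quotient_topology) ?S"
      unfolding openin_prod_topology_alt
    proof (intro allI impI)
      fix a b assume ab: "(a, b) \<in> ?S"
      then obtain x y where xy: "x \<in> carrier G" "y \<in> carrier G" "a = rep x" "b = rep y"
        by auto
      then have "x \<otimes> y \<in> {z \<in> carrier G. rep z \<in> A}"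
        using ab by simp
      then obtain A1 B1 where AB: "openin T A1" "openin T B1" "x \<in> A1" "y \<in> B1"
        "\<And>p q. p \<in> A1 \<Longrightarrow> q \<in> B1 \<Longrightarrow> p \<otimes> q \<in> {z \<in> carrier G. rep z \<in> A}"
        using mult_openin_nbhds[OF P xy(1,2)] by metis
      have "rep ` A1 \<times> rep ` B1 \<subseteq> ?S"
        using AB(5) openin_subset_carrier[OF AB(1)] openin_subset_carrier[OF AB(2)]
        by (auto simp: subset_iff)
      moreover have "openin quotient_topology (rep ` A1)" "openin quotient_topology (rep ` B1)"
        using open_map_rep AB(1,2) unfolding open_map_def by auto
      ultimately show "\<exists>U V. openin quotient_topology U \<and> openin quotient_topology V \<and>
          a \<in> U \<and> b \<in> V \<and> U \<times> V \<subseteq> ?S"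
        using xy AB(3,4) by blast
    qed
  qed
  show "continuous_map quotient_topology quotient_topology (\<lambda>a. inv\<^bsub>quotient_group\<^esub> a)"
    unfolding continuous_map_def
  proof (intro conjI allI impI)
    show "(\<lambda>a. inv\<^bsub>quotient_group\<^esub> a) \<in> topspace quotient_topology \<rightarrow> topspace quotient_topology"
      using inv_quotient_group by auto
    fix A assume A: "openin quotient_topology A"
    let ?P = "{x \<in> topspace T. inv x \<in> {z \<in> carrier G. rep z \<in> A}}"
    have "openin T ?P"
      using A unfolding openin_quotient_topology
      by (intro openin_continuous_map_preimage[OF continuous_map_inv]) auto
    moreover have "{a \<in> topspace quotient_topology. inv\<^bsub>quotient_group\<^esub> a \<in> A} = rep ` ?P"
      using inv_quotient_group by auto
    ultimately show "openin quotient_topology {a \<in> topspace quotient_topology. inv\<^bsub>quotient_group\<^esub> a \<in> A}"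
      using open_map_rep unfolding open_map_def by simp
  qed
qed

lemma topgroup_quotient_group: "topgroup quotient_group quotient_topology"
  using group_quotient_group topological_group_quotient by (simp add: topgroup_def topgroup_axioms_def)

lemma Lindelof_space_quotient: "Lindelof_space T \<Longrightarrow> Lindelof_space quotient_topology"
  using Lindelof_space_continuous_map_image[OF _ continuous_map_rep] by simp

lemma basically_disconnected_quotient:
  assumes "basically_disconnected T"
  shows "basically_disconnected quotient_topology"
  using basically_disconnected_open_map_image[OF assms continuous_map_rep open_map_rep] by simp

lemma rep_preimage_one: "{x \<in> carrier G. rep x \<in> {rep \<one>}} = N"
  using rep_eq_iff subgroup.mem_carrier[OF subgroup_N] by auto

lemma Hausdorff_space_quotient: "Hausdorff_space quotient_topology"
proof -
  have "{x \<in> carrier G. rep x \<in> rep ` carrier G - {rep \<one>}} = carrier G - N"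
    using rep_preimage_one by blast
  then have "openin quotient_topology (topspace quotient_topology - {rep \<one>})"
    using closedin_N unfolding openin_quotient_topology closedin_def by auto
  then have "closedin quotient_topology {\<one>\<^bsub>quotient_group\<^esub>}"
    unfolding closedin_def by auto
  then show ?thesis
    using topgroup.Hausdorff_space_if_closedin_one[OF topgroup_quotient_group] by blast
qed

lemma openin_N_if_quotient_discrete:
  assumes "quotient_topology = discrete_topology (topspace quotient_topology)"
  shows "openin T N"
proof -
  have "openin quotient_topology {rep \<one>}"
    using assms by (metis discrete_topology_unique one_closed image_eqI topspace_quotient_topology)
  then show ?thesis
    unfolding openin_quotient_topology rep_preimage_one by blast
qed

lemma countable_pseudocharacter_quotient:
  assumes \<N>: "countable \<N>" "\<N> \<noteq> {}" "N = \<Inter>\<N>" "\<And>U. U \<in> \<N> \<Longrightarrow> openin T U"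
    "\<And>U. U \<in> \<N> \<Longrightarrow> \<exists>V\<in>\<N>. \<forall>a\<in>V. \<forall>b\<in>V. a \<otimes> b \<in> U"
  shows "countable_pseudocharacter quotient_group quotient_topology"
  unfolding countable_pseudocharacter_def gdelta_in_alt
proof
  show "{\<one>\<^bsub>quotient_group\<^esub>} \<subseteq> topspace quotient_topology"
    by simp
  have "\<Inter>((\<lambda>U. rep ` U) ` \<N>) = {rep \<one>}"
  proof (intro equalityI subsetI)
    fix a assume a: "a \<in> \<Inter>((\<lambda>U. rep ` U) ` \<N>)"
    obtain U0 where U0: "U0 \<in> \<N>"
      using \<N>(2) by blast
    then have "a \<in> rep ` U0"
      using a by blast
    then obtain z where z: "z \<in> U0" "a = rep z"
      by (elim imageE)
    have "z \<in> carrier G"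
      using openin_subset_carrier[OF \<N>(4)[OF U0]] z(1) by (rule subsetD)
    then have aG: "a \<in> carrier G" and rep_a: "rep a = a"
      using z(2) rep_rep by auto
    have "a \<in> U" if U: "U \<in> \<N>" for U
    proof -
      obtain V where V: "V \<in> \<N>" "\<forall>a\<in>V. \<forall>b\<in>V. a \<otimes> b \<in> U"
        using \<N>(5)[OF U] by blast
      then obtain v where v: "v \<in> V" "a = rep v"
        using a by blast
      have vG: "v \<in> carrier G"
        using openin_subset_carrier[OF \<N>(4)[OF V(1)]] v(1) by (rule subsetD)
      have "a \<otimes> inv v \<in> N"
        using rep_eq_iff[OF aG vG] rep_a v(2) by simp
      then have "a \<otimes> inv v \<in> V"
        using \<N>(3) V(1) by blast
      then have "(a \<otimes> inv v) \<otimes> v \<in> U"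
        using V(2) v(1) by blast
      then show "a \<in> U"
        using aG vG by (simp add: m_assoc)
    qed
    then have "a \<in> N"
      using \<N>(3) by blast
    then show "a \<in> {rep \<one>}"
      using rep_eq_iff[OF aG one_closed] rep_a aG by simp
  next
    fix a assume "a \<in> {rep \<one>}"
    then show "a \<in> \<Inter>((\<lambda>U. rep ` U) ` \<N>)"
      using \<N>(3) subgroup.one_closed[OF subgroup_N] by blast
  qed
  moreover have "openin quotient_topology (rep ` U)" if "U \<in> \<N>" for U
    using open_map_rep \<N>(4)[OF that] unfolding open_map_def by blast
  ultimately show "(countable intersection_of openin quotient_topology) {\<one>\<^bsub>quotient_group\<^esub>}"
    unfolding intersection_of_def using \<N>(1) by (intro exI[of _ "(\<lambda>U. rep ` U) ` \<N>"]) auto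
qed

end

context topgroup
begin

lemma discrete_if_P_space:
  assumes "P_space T" "countable_pseudocharacter G T"
  shows "T = discrete_topology (topspace T)"
  using assms unfolding P_space_def countable_pseudocharacter_def
  by (blast intro: discrete_topology_if_openin_one)

text \<open>Guran's theorem makes the intersection of a suitable countable family of neighbourhoods of
  \<open>\<one>\<close> a closed normal subgroup \<open>N\<close>; \<open>G/N\<close> has countable pseudocharacter, and it is not discrete
  because \<open>N\<close> lies in a \<open>G\<^sub>\<delta>\<close> set that is not a neighbourhood of \<open>\<one>\<close>.\<close>

lemma quotient_of_non_P_space:
  assumes Lin: "Lindelof_space T" and bd: "basically_disconnected T"
    and Hd: "Hausdorff_space T" and nP: "\<not> P_space T"
  shows "\<exists>(H :: 'a monoid) TH. topological_group H TH \<and> TH \<noteq> discrete_topology (topspace TH) \<and>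
    Lindelof_space TH \<and> basically_disconnected TH \<and> Hausdorff_space TH \<and> countable_pseudocharacter H TH"
proof -
  obtain \<O> where \<O>: "countable \<O>" "\<And>U. U \<in> \<O> \<Longrightarrow> openin T U \<and> \<one> \<in> U"
    "\<And>V. openin T V \<Longrightarrow> \<one> \<in> V \<Longrightarrow> \<not> V \<subseteq> \<Inter>\<O>"
    using not_P_space_Gdelta_nbhds[OF nP] by metis
  obtain \<N> where \<N>: "countable \<N>" "\<N> \<noteq> {}" "\<O> \<subseteq> \<N>" "\<And>U. U \<in> \<N> \<Longrightarrow> openin T U \<and> \<one> \<in> U"
    "\<And>U. U \<in> \<N> \<Longrightarrow> \<exists>V\<in>\<N>. \<forall>a\<in>V. \<forall>b\<in>V. a \<otimes> b \<in> U" "\<Inter>\<N> \<lhd> G" "closedin T (\<Inter>\<N>)"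
    using Lindelof_Gdelta_normal_subgroup[OF Lin \<O>(1,2)] by metis
  interpret Q: topgroup_quotient G T "\<Inter>\<N>"
    by (intro topgroup_quotient.intro topgroup.intro topgroup_quotient_axioms.intro is_group
        topgroup_axioms \<N>(6,7))
  have "Q.quotient_topology \<noteq> discrete_topology (topspace Q.quotient_topology)"
  proof
    assume "Q.quotient_topology = discrete_topology (topspace Q.quotient_topology)"
    then have "openin T (\<Inter>\<N>)"
      by (rule Q.openin_N_if_quotient_discrete)
    moreover have "\<one> \<in> \<Inter>\<N>"
      using \<N>(4) by blast
    moreover have "\<Inter>\<N> \<subseteq> \<Inter>\<O>"
      using \<N>(3) by blast
    ultimately show False
      using \<O>(3) by blast
  qed
  moreover have "countable_pseudocharacter Q.quotient_group Q.quotient_topology"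
    using \<N> by (intro Q.countable_pseudocharacter_quotient) auto
  ultimately show ?thesis
    using Q.topological_group_quotient Q.Lindelof_space_quotient[OF Lin]
      Q.basically_disconnected_quotient[OF bd] Q.Hausdorff_space_quotient
    by (intro exI[of _ Q.quotient_group] exI[of _ Q.quotient_topology]) simp
qed

lemma boolean_open_subgroup_topology:
  assumes nd: "T \<noteq> discrete_topology (topspace T)" and Lin: "Lindelof_space T"
    and bd: "basically_disconnected T" and Hd: "Hausdorff_space T"
    and cp: "countable_pseudocharacter G T"
  shows "\<exists>(H :: ('a, 'b) monoid_scheme) TH. topological_group H TH \<and>
    TH \<noteq> discrete_topology (topspace TH) \<and> Lindelof_space TH \<and> boolean_group H \<and>
    basically_disconnected TH \<and> Hausdorff_space TH \<and> countable_pseudocharacter H TH"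
proof -
  have one: "gdelta_in T {\<one>}"
    using cp unfolding countable_pseudocharacter_def .
  obtain U where "openin T U" "\<one> \<in> U" "\<And>x. x \<in> U \<Longrightarrow> x \<otimes> x = \<one>"
    using involution_nbhd[OF Lin bd Hd one] by metis
  then obtain K where K: "subgroup K G" "openin T K" "\<And>x. x \<in> K \<Longrightarrow> x \<otimes> x = \<one>"
    using open_boolean_subgroup by metis
  have K_closed: "closedin T K"
    using K(1,2) by (rule closedin_open_subgroup)
  have "subtopology T K \<noteq> discrete_topology (topspace (subtopology T K))"
  proof
    assume "subtopology T K = discrete_topology (topspace (subtopology T K))"
    then have "openin (subtopology T K) {\<one>}"
      using subgroup.one_closed[OF K(1)] K(2) openin_subset
      by (metis discrete_topology_unique insert_subset empty_subsetI topspace_subtopology_subset)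
    then have "openin T {\<one>}"
      using K(2) by (simp add: openin_open_subtopology)
    then show False
      using nd discrete_topology_if_openin_one by blast
  qed
  moreover have "countable_pseudocharacter (G\<lparr>carrier := K\<rparr>) (subtopology T K)"
    unfolding countable_pseudocharacter_def gdelta_in_subtopology
    using one subgroup.one_closed[OF K(1)] by auto
  moreover have "boolean_group (G\<lparr>carrier := K\<rparr>)"
    unfolding boolean_group_def using K(3) by simp
  ultimately show ?thesis
    using topological_group_subgroup[OF K(1)] Lindelof_space_closedin_subtopology[OF Lin K_closed]
      basically_disconnected_clopen_subtopology[OF bd K(2) K_closed] Hausdorff_space_subtopology[OF Hd]
    by (intro exI[of _ "G\<lparr>carrier := K\<rparr>"] exI[of _ "subtopology T K"]) simp
qed

end

theorem corollary2:
  "(\<exists>(G :: 'a monoid) T. topological_group G T \<and> Lindelof_space T \<and>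
       basically_disconnected T \<and> Hausdorff_space T \<and> \<not> P_space T)
   \<longleftrightarrow>
   (\<exists>(G :: 'a monoid) T. topological_group G T \<and> T \<noteq> discrete_topology (topspace T) \<and>
       Lindelof_space T \<and> boolean_group G \<and> basically_disconnected T \<and>
       Hausdorff_space T \<and> countable_pseudocharacter G T)"
proof
  assume "\<exists>(G :: 'a monoid) T. topological_group G T \<and> Lindelof_space T \<and>
    basically_disconnected T \<and> Hausdorff_space T \<and> \<not> P_space T"
  then obtain G :: "'a monoid" and T where G: "topgroup G T" and
    T: "Lindelof_space T" "basically_disconnected T" "Hausdorff_space T" "\<not> P_space T"
    by (auto simp: topgroup_def topgroup_axioms_def topological_group_def)
  obtain H :: "'a monoid" and TH where H: "topgroup H TH" and
    TH: "TH \<noteq> discrete_topology (topspace TH)" "Lindelof_space TH" "basically_disconnected TH"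
      "Hausdorff_space TH" "countable_pseudocharacter H TH"
    using topgroup.quotient_of_non_P_space[OF G T]
    by (auto simp: topgroup_def topgroup_axioms_def topological_group_def)
  show "\<exists>(G :: 'a monoid) T. topological_group G T \<and> T \<noteq> discrete_topology (topspace T) \<and>
    Lindelof_space T \<and> boolean_group G \<and> basically_disconnected T \<and>
    Hausdorff_space T \<and> countable_pseudocharacter G T"
    using topgroup.boolean_open_subgroup_topology[OF H TH] .
next
  assume "\<exists>(G :: 'a monoid) T. topological_group G T \<and> T \<noteq> discrete_topology (topspace T) \<and>
    Lindelof_space T \<and> boolean_group G \<and> basically_disconnected T \<and>
    Hausdorff_space T \<and> countable_pseudocharacter G T"
  then obtain G :: "'a monoid" and T where G: "topgroup G T" and
    T: "T \<noteq> discrete_topology (topspace T)" "Lindelof_space T" "basically_disconnected T"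
      "Hausdorff_space T" "countable_pseudocharacter G T"
    by (auto simp: topgroup_def topgroup_axioms_def topological_group_def)
  then have "\<not> P_space T"
    using topgroup.discrete_if_P_space by blast
  then show "\<exists>(G :: 'a monoid) T. topological_group G T \<and> Lindelof_space T \<and>
    basically_disconnected T \<and> Hausdorff_space T \<and> \<not> P_space T"
    using G T by (auto simp: topgroup_def topgroup_axioms_def)
qed

end
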